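(* Let $A$ be any algebra (over a field of characteristic $0$) that is alternative and satisfies $(ab)c=(ba)c$ for all $a,b,c$. Then for all $a,b,c,d\in A$: \[ ((ab)c)d=((ac)b)d,\qquad d((ab)c)=((ab)d)c,\qquad d(c(ab))=((ac)d)b. \]
   Context: An algebra is alternative if $(x,x,y)=0=(x,y,y)$ for all $x,y$, where $(x,y,z)=(xy)z-x(yz)$. This variety is the Koszul dual of the variety of left-symmetric algebras satisfying $a(bc)+b(ac)+a(cb)+c(ab)+b(ca)+c(ba)=0$. *)

theory Defs
  imports Complex_Main
begin

definition nonassoc_algebra ::
  "('k::field \<Rightarrow> 'a::ab_group_add \<Rightarrow> 'a) \<Rightarrow> ('a \<Rightarrow> 'a \<Rightarrow> 'a) \<Rightarrow> bool" where
  "nonassoc_algebra smul mult \<longleftrightarrow>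
     vector_space smul \<and>
     (\<forall>x y z. mult (x + y) z = mult x z + mult y z) \<and>
     (\<forall>x y z. mult x (y + z) = mult x y + mult x z) \<and>
     (\<forall>c x y. mult (smul c x) y = smul c (mult x y)) \<and>
     (\<forall>c x y. mult x (smul c y) = smul c (mult x y))"

definition associator :: "('a \<Rightarrow> 'a \<Rightarrow> 'a) \<Rightarrow> 'a \<Rightarrow> 'a \<Rightarrow> 'a \<Rightarrow> 'a::ab_group_add" where
  "associator mult x y z = mult (mult x y) z - mult x (mult y z)"

definition alternative :: "('a::ab_group_add \<Rightarrow> 'a \<Rightarrow> 'a) \<Rightarrow> bool" where
  "alternative mult \<longleftrightarrow>
     (\<forall>x y. associator mult x x y = 0) \<and>
     (\<forall>x y. associator mult x y y = 0)"

end

theory Submission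
  imports Defs
begin

text \<open>
  Write (x,y,z) for the associator, which is alternating in an alternative ring. The hypothesis
  says that commutators [a,b] annihilate from the left, hence so does a[b,c] = [a,[b,c]] + [b,c]a,
  and the identity [ab,c] = a[b,c] + [a,c]b + 3(a,b,c) shows that associators annihilate from
  the left too. Modulo its left annihilator the ring is thus commutative and associative, which
  gives the first identity. Teichmueller's identity with repeated arguments yields (xy,z,x) = 0;
  linearising it and using (xy,z,w) = (yx,z,w), the map (x,y,w) \<mapsto> (xy,z,w) is symmetric in
  x,y but antisymmetric in x,w, so it vanishes. The other two identities are rearrangements of
  (ab,c,d) = 0. Characteristic 0 enters only through the absence of 2- and 3-torsion.
\<close>

locale biadditive =
  fixes mult :: "'a::ab_group_add \<Rightarrow> 'a \<Rightarrow> 'a"  (infixl \<open>\<cdot>\<close> 70)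
  assumes mult_add_left: "(x + y) \<cdot> z = x \<cdot> z + y \<cdot> z"
    and mult_add_right: "x \<cdot> (y + z) = x \<cdot> y + x \<cdot> z"
begin

lemma additive_mult_left: "additive (\<lambda>x. x \<cdot> y)"
  by unfold_locales (rule mult_add_left)

lemma additive_mult_right: "additive (\<lambda>y. x \<cdot> y)"
  by unfold_locales (rule mult_add_right)

lemma mult_zero_left [simp]: "0 \<cdot> x = 0"
  using additive.zero [OF additive_mult_left] .

lemma mult_zero_right [simp]: "x \<cdot> 0 = 0"
  using additive.zero [OF additive_mult_right] .

lemma mult_diff_left: "(x - y) \<cdot> z = x \<cdot> z - y \<cdot> z"
  using additive.diff [OF additive_mult_left] .

lemma mult_diff_right: "x \<cdot> (y - z) = x \<cdot> y - x \<cdot> z"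
  using additive.diff [OF additive_mult_right] .

lemmas mult_distribs = mult_add_left mult_add_right mult_diff_left mult_diff_right

lemma associator_add1: "associator (\<cdot>) (x + y) z w = associator (\<cdot>) x z w + associator (\<cdot>) y z w"
  by (simp add: associator_def mult_distribs)

lemma associator_add2: "associator (\<cdot>) x (y + z) w = associator (\<cdot>) x y w + associator (\<cdot>) x z w"
  by (simp add: associator_def mult_distribs)

lemma associator_add3: "associator (\<cdot>) x y (z + w) = associator (\<cdot>) x y z + associator (\<cdot>) x y w"
  by (simp add: associator_def mult_distribs)

lemma teichmueller_identity:
  "associator (\<cdot>) (a \<cdot> b) c d - associator (\<cdot>) a (b \<cdot> c) d + associator (\<cdot>) a b (c \<cdot> d)
     = a \<cdot> associator (\<cdot>) b c d + associator (\<cdot>) a b c \<cdot> d"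
  by (simp add: associator_def mult_distribs)

lemma commutator_product:
  "a \<cdot> b \<cdot> c - c \<cdot> (a \<cdot> b) = a \<cdot> (b \<cdot> c - c \<cdot> b) + (a \<cdot> c - c \<cdot> a) \<cdot> b
     + associator (\<cdot>) a b c - associator (\<cdot>) a c b + associator (\<cdot>) c a b"
  by (simp add: associator_def mult_distribs)

end

locale alternative_ring = biadditive +
  assumes alternative: "alternative (\<cdot>)"
begin

lemma associator_left_alternative [simp]: "associator (\<cdot>) x x y = 0"
  using alternative unfolding alternative_def by blast

lemma associator_right_alternative [simp]: "associator (\<cdot>) x y y = 0"
  using alternative unfolding alternative_def by blast

lemma associator_swap12: "associator (\<cdot>) y x z = - associator (\<cdot>) x y z"
proof -
  have "associator (\<cdot>) x y z + associator (\<cdot>) y x z = associator (\<cdot>) (x + y) (x + y) z"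
    unfolding associator_add1 associator_add2 by simp
  also have "\<dots> = 0" by (rule associator_left_alternative)
  finally show ?thesis by (rule add_eq_0_iff [THEN iffD1])
qed

lemma associator_swap23: "associator (\<cdot>) x z y = - associator (\<cdot>) x y z"
proof -
  have "associator (\<cdot>) x y z + associator (\<cdot>) x z y = associator (\<cdot>) x (y + z) (y + z)"
    unfolding associator_add2 associator_add3 by simp
  also have "\<dots> = 0" by (rule associator_right_alternative)
  finally show ?thesis by (rule add_eq_0_iff [THEN iffD1])
qed

lemma associator_rotate: "associator (\<cdot>) y z x = associator (\<cdot>) x y z"
  by (metis associator_swap12 associator_swap23)

lemma commutator_product_alternative:
  "a \<cdot> b \<cdot> c - c \<cdot> (a \<cdot> b) = a \<cdot> (b \<cdot> c - c \<cdot> b) + (a \<cdot> c - c \<cdot> a) \<cdot> b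
     + (associator (\<cdot>) a b c + associator (\<cdot>) a b c + associator (\<cdot>) a b c)"
  using commutator_product [of a b c]
  by (simp add: associator_swap23 [of a c b] associator_rotate [of a b c])

end

locale left_commutative_alternative_ring = alternative_ring mult
  for mult :: "'a::ab_group_add \<Rightarrow> 'a \<Rightarrow> 'a"  (infixl \<open>\<cdot>\<close> 70) +
  assumes left_commute: "a \<cdot> b \<cdot> c = b \<cdot> a \<cdot> c"
    and no_2_torsion: "(x::'a) + x = 0 \<Longrightarrow> x = 0"
    and no_3_torsion: "(x::'a) + x + x = 0 \<Longrightarrow> x = 0"
begin

lemma commutator_left_annihilates: "(a \<cdot> b - b \<cdot> a) \<cdot> c = 0"
  by (simp add: mult_diff_left left_commute [of a b])

lemma mult_commutator_left_annihilates: "a \<cdot> (b \<cdot> c - c \<cdot> b) \<cdot> d = 0"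
  by (simp add: left_commute [of a] commutator_left_annihilates)

lemma associator_left_annihilates: "associator (\<cdot>) a b c \<cdot> d = 0"
proof (rule no_3_torsion)
  let ?t = "associator (\<cdot>) a b c \<cdot> d"
  have "?t + ?t + ?t
      = (a \<cdot> b \<cdot> c - c \<cdot> (a \<cdot> b)) \<cdot> d - a \<cdot> (b \<cdot> c - c \<cdot> b) \<cdot> d - (a \<cdot> c - c \<cdot> a) \<cdot> b \<cdot> d"
    unfolding commutator_product_alternative mult_add_left by simp
  also have "\<dots> = 0"
    by (simp add: commutator_left_annihilates mult_commutator_left_annihilates)
  finally show "?t + ?t + ?t = 0" .
qed

lemma triple_product_right_commute: "a \<cdot> b \<cdot> c \<cdot> d = a \<cdot> c \<cdot> b \<cdot> d"
proof -
  have "a \<cdot> b \<cdot> c - a \<cdot> c \<cdot> b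
      = associator (\<cdot>) a b c - associator (\<cdot>) a c b + a \<cdot> (b \<cdot> c - c \<cdot> b)"
    by (simp add: associator_def mult_diff_right)
  then have "a \<cdot> b \<cdot> c \<cdot> d - a \<cdot> c \<cdot> b \<cdot> d
      = associator (\<cdot>) a b c \<cdot> d - associator (\<cdot>) a c b \<cdot> d + a \<cdot> (b \<cdot> c - c \<cdot> b) \<cdot> d"
    by (metis mult_add_left mult_diff_left)
  also have "\<dots> = 0"
    by (simp add: associator_left_annihilates mult_commutator_left_annihilates)
  finally show ?thesis by simp
qed

lemma associator_square_right: "associator (\<cdot>) x y (z \<cdot> z) = associator (\<cdot>) x (y \<cdot> z) z"
  using teichmueller_identity [of x y z z] by (simp add: associator_left_annihilates)

lemma associator_product_self: "associator (\<cdot>) (x \<cdot> y) z x = 0"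
proof -
  have "associator (\<cdot>) z (x \<cdot> x) y = associator (\<cdot>) y z (x \<cdot> x)"
    by (rule associator_rotate)
  also have "\<dots> = associator (\<cdot>) y (z \<cdot> x) x"
    by (rule associator_square_right)
  also have "\<dots> = associator (\<cdot>) (z \<cdot> x) x y"
    by (rule associator_rotate [symmetric])
  finally have "associator (\<cdot>) z x (x \<cdot> y) = 0"
    using teichmueller_identity [of z x x y] by simp
  then show ?thesis
    by (simp add: associator_rotate [of x "x \<cdot> y" z] associator_rotate [of z x "x \<cdot> y"])
qed

lemma associator_product_commute: "associator (\<cdot>) (x \<cdot> y) z w = associator (\<cdot>) (y \<cdot> x) z w"
  by (simp add: associator_def left_commute [of x y])

lemma associator_product_antisym: "associator (\<cdot>) (x \<cdot> y) z w = - associator (\<cdot>) (w \<cdot> y) z x"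
proof -
  have "associator (\<cdot>) (x \<cdot> y) z w + associator (\<cdot>) (w \<cdot> y) z x
      = associator (\<cdot>) ((x + w) \<cdot> y) z (x + w)"
    unfolding mult_add_left associator_add1 associator_add3
    by (simp add: associator_product_self)
  also have "\<dots> = 0" by (rule associator_product_self)
  finally show ?thesis by (simp add: eq_neg_iff_add_eq_0)
qed

lemma associator_product_eq_0: "associator (\<cdot>) (x \<cdot> y) z w = 0"
proof (rule no_2_torsion)
  have "associator (\<cdot>) (x \<cdot> y) z w = - associator (\<cdot>) (w \<cdot> y) z x"
    by (rule associator_product_antisym)
  also have "\<dots> = - associator (\<cdot>) (y \<cdot> w) z x"
    by (simp add: associator_product_commute)
  also have "\<dots> = associator (\<cdot>) (x \<cdot> w) z y"
    by (simp add: associator_product_antisym [of y w])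
  also have "\<dots> = associator (\<cdot>) (w \<cdot> x) z y"
    by (rule associator_product_commute)
  also have "\<dots> = - associator (\<cdot>) (y \<cdot> x) z w"
    by (rule associator_product_antisym)
  also have "\<dots> = - associator (\<cdot>) (x \<cdot> y) z w"
    by (simp add: associator_product_commute)
  finally show "associator (\<cdot>) (x \<cdot> y) z w + associator (\<cdot>) (x \<cdot> y) z w = 0"
    by (simp add: eq_neg_iff_add_eq_0)
qed

lemma left_mult_product_mult: "d \<cdot> (a \<cdot> b \<cdot> c) = a \<cdot> b \<cdot> d \<cdot> c"
proof -
  have "associator (\<cdot>) d (a \<cdot> b) c = 0"
    using associator_product_eq_0 by (simp add: associator_rotate [symmetric, of d])
  then show ?thesis by (simp add: associator_def left_commute [of d])
qed

lemma left_mult_mult_product: "d \<cdot> (c \<cdot> (a \<cdot> b)) = a \<cdot> c \<cdot> d \<cdot> b"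
proof -
  have "associator (\<cdot>) d c (a \<cdot> b) = 0"
    using associator_product_eq_0 [of a b d c]
    by (simp add: associator_rotate [of d c "a \<cdot> b"] associator_rotate [of c "a \<cdot> b" d])
  then have "d \<cdot> (c \<cdot> (a \<cdot> b)) = d \<cdot> c \<cdot> (a \<cdot> b)"
    by (simp add: associator_def)
  also have "\<dots> = c \<cdot> d \<cdot> (a \<cdot> b)" by (rule left_commute)
  also have "\<dots> = c \<cdot> d \<cdot> a \<cdot> b"
    using associator_product_eq_0 [of c d a b] by (simp add: associator_def)
  also have "\<dots> = a \<cdot> c \<cdot> d \<cdot> b"
    by (simp add: triple_product_right_commute [of c d] left_commute [of c a])
  finally show ?thesis .
qed

end

lemma vector_space_char_0_no_2_torsion:
  fixes scale :: "'k::field_char_0 \<Rightarrow> 'a::ab_group_add \<Rightarrow> 'a" and x :: 'a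
  assumes "vector_space scale" and "x + x = 0"
  shows "x = 0"
proof -
  interpret vector_space scale by fact
  have "scale 2 x = x + x"
    using scale_left_distrib [of 1 1 x] by simp
  with \<open>x + x = 0\<close> show ?thesis by simp
qed

lemma vector_space_char_0_no_3_torsion:
  fixes scale :: "'k::field_char_0 \<Rightarrow> 'a::ab_group_add \<Rightarrow> 'a" and x :: 'a
  assumes "vector_space scale" and "x + x + x = 0"
  shows "x = 0"
proof -
  interpret vector_space scale by fact
  have "scale 3 x = x + x + x"
    using scale_left_distrib [of 2 1 x] scale_left_distrib [of 1 1 x] by simp
  with \<open>x + x + x = 0\<close> show ?thesis by simp
qed

theorem mainTheorem18:
  fixes smul :: "'k::field_char_0 \<Rightarrow> 'a::ab_group_add \<Rightarrow> 'a"
    and mult :: "'a \<Rightarrow> 'a \<Rightarrow> 'a"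
  assumes "nonassoc_algebra smul mult"
    and "alternative mult"
    and "\<forall>a b c. mult (mult a b) c = mult (mult b a) c"
  shows "\<forall>a b c d.
           mult (mult (mult a b) c) d = mult (mult (mult a c) b) d \<and>
           mult d (mult (mult a b) c) = mult (mult (mult a b) d) c \<and>
           mult d (mult c (mult a b)) = mult (mult (mult a c) d) b"
proof -
  have "vector_space smul"
    using assms(1) unfolding nonassoc_algebra_def by blast
  then interpret left_commutative_alternative_ring mult
    using assms vector_space_char_0_no_2_torsion vector_space_char_0_no_3_torsion
    by unfold_locales (auto simp: nonassoc_algebra_def)
  show ?thesis
    using triple_product_right_commute left_mult_product_mult left_mult_mult_product by blast
qed

end
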